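(* Let $T\in\mathbb{T}$ be a weighted caterpillar that is not a star, with $n$ pendant vertices and $k$ non-pendant vertices $v_1,\dots,v_k$ such that $v_i$ is adjacent to $v_{i+1}$ for $i=1,\dots,k-1$. Let $t_i$ be the number of pendant vertices adjacent to $v_i$. Then the number of edges of $T^{\#}$ is $n+t_1t_2+t_2t_3+\cdots+t_{k-1}t_k$.
   Context: $\mathbb{T}$ is the class of simple undirected weighted trees $T$ (nonzero real weights on edges) such that (i) $T$ has at least one non-pendant vertex, and (ii) every non-pendant vertex of $T$ is adjacent to at least one pendant vertex (a vertex of degree one). A caterpillar is a tree such that deleting all leaves and their incident edges yields a path. The adjacency matrix $A$ of $T$ has $(i,j)$ entry equal to the weight of edge $v_iv_j$, or $0$ if no edge; $A^{\#}$ is its group inverse (unique $X$ with $AXA=A$, $XAX=X$, $AX=XA$); $T^{\#}$ is the weighted graph on the vertex set of $T$ with $v_iv_j$ an edge iff $(A^{\#})_{ij}\neq 0$, weighted by that entry. *)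

theory Defs
  imports "HOL-Analysis.Analysis"
begin

text \<open>A weighted simple undirected graph on the finite vertex type 'v is given by a
  weight function w: vertices u, v are adjacent iff w u v \<noteq> 0, and then w u v is
  the (nonzero real) weight of the edge uv.\<close>

definition weighted_graph :: "('v \<Rightarrow> 'v \<Rightarrow> real) \<Rightarrow> bool" where
  "weighted_graph w \<longleftrightarrow> (\<forall>u v. w u v = w v u) \<and> (\<forall>u. w u u = 0)"

definition adj :: "('v \<Rightarrow> 'v \<Rightarrow> real) \<Rightarrow> 'v \<Rightarrow> 'v \<Rightarrow> bool" where
  "adj w u v \<longleftrightarrow> w u v \<noteq> 0"

definition connected_graph :: "('v \<Rightarrow> 'v \<Rightarrow> real) \<Rightarrow> bool" where
  "connected_graph w \<longleftrightarrow> (\<forall>u v. (u, v) \<in> {(x, y). adj w x y}\<^sup>*)"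

definition is_cycle :: "('v \<Rightarrow> 'v \<Rightarrow> real) \<Rightarrow> 'v list \<Rightarrow> bool" where
  "is_cycle w cs \<longleftrightarrow> length cs \<ge> 3 \<and> distinct cs \<and>
     (\<forall>i. Suc i < length cs \<longrightarrow> adj w (cs ! i) (cs ! Suc i)) \<and>
     adj w (last cs) (hd cs)"

definition is_tree :: "('v::finite \<Rightarrow> 'v \<Rightarrow> real) \<Rightarrow> bool" where
  "is_tree w \<longleftrightarrow> weighted_graph w \<and> connected_graph w \<and> (\<nexists>cs. is_cycle w cs)"

definition degree :: "('v::finite \<Rightarrow> 'v \<Rightarrow> real) \<Rightarrow> 'v \<Rightarrow> nat" where
  "degree w v = card {u. adj w v u}"

definition pendant :: "('v::finite \<Rightarrow> 'v \<Rightarrow> real) \<Rightarrow> 'v \<Rightarrow> bool" where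
  "pendant w v \<longleftrightarrow> degree w v = 1"

definition class_T :: "('v::finite \<Rightarrow> 'v \<Rightarrow> real) \<Rightarrow> bool" where
  "class_T w \<longleftrightarrow> is_tree w \<and> (\<exists>v. \<not> pendant w v) \<and>
     (\<forall>v. \<not> pendant w v \<longrightarrow> (\<exists>u. pendant w u \<and> adj w v u))"

text \<open>Caterpillar: deleting all leaves (and incident edges) yields a path, i.e. the
  non-pendant vertices can be enumerated p 1, ..., p m so that two of them are
  adjacent iff they are consecutive.\<close>
definition caterpillar :: "('v::finite \<Rightarrow> 'v \<Rightarrow> real) \<Rightarrow> bool" where
  "caterpillar w \<longleftrightarrow> is_tree w \<and>
     (\<exists>(m::nat) (p::nat \<Rightarrow> 'v). bij_betw p {1..m} {v. \<not> pendant w v} \<and>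
        (\<forall>i\<in>{1..m}. \<forall>j\<in>{1..m}. adj w (p i) (p j) \<longleftrightarrow> (j = i + 1 \<or> i = j + 1)))"

definition is_star :: "('v::finite \<Rightarrow> 'v \<Rightarrow> real) \<Rightarrow> bool" where
  "is_star w \<longleftrightarrow> is_tree w \<and> (\<exists>c. \<forall>u. u \<noteq> c \<longrightarrow> adj w c u)"

definition adj_matrix :: "('v::finite \<Rightarrow> 'v \<Rightarrow> real) \<Rightarrow> real^'v^'v" where
  "adj_matrix w = (\<chi> i j. w i j)"

definition is_group_inverse :: "real^'n^'n \<Rightarrow> real^'n^'n \<Rightarrow> bool" where
  "is_group_inverse A X \<longleftrightarrow> A ** X ** A = A \<and> X ** A ** X = X \<and> A ** X = X ** A"

definition group_inverse :: "real^'n^'n \<Rightarrow> real^'n^'n" where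
  "group_inverse A = (THE X. is_group_inverse A X)"

text \<open>Edges of the graph whose weights are the entries of a matrix M (T^# for M = A^#).\<close>
definition matrix_graph_edges :: "real^'v^'v \<Rightarrow> 'v set set" where
  "matrix_graph_edges M = {{i, j} | i j. i \<noteq> j \<and> M $ i $ j \<noteq> 0}"

end

theory Submission
  imports Defs
begin

text \<open>For \<open>T \<in> \<T>\<close> the group inverse of the adjacency matrix is explicit. Let \<open>s\<^sub>p\<close> be
  the sum of the squared weights of the pendant edges at a non-pendant vertex \<open>p\<close>
  (positive by the definition of \<open>\<T>\<close>). If \<open>x, y\<close> are pendant with neighbours \<open>a, b\<close>, then
  \<open>A\<^sup>#(x,a) = w\<^sub>x\<^sub>a / s\<^sub>a\<close> and \<open>A\<^sup>#(x,y) = - w\<^sub>x\<^sub>a w\<^sub>a\<^sub>b w\<^sub>y\<^sub>b / (s\<^sub>a s\<^sub>b)\<close>, and all other entries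
  vanish; this is verified through \<open>A A\<^sup># = A\<^sup># A = P\<close>, \<open>P A = A\<close>, \<open>P A\<^sup># = A\<^sup>#\<close> for an
  explicit idempotent \<open>P\<close>. So the edges of \<open>T\<^sup>#\<close> are the \<open>n\<close> pendant edges together with
  the pairs of pendants whose neighbours are adjacent. On a caterpillar these neighbours are
  consecutive spine vertices \<open>v\<^sub>i, v\<^sub>i\<^sub>+\<^sub>1\<close>, which contribute \<open>t\<^sub>i t\<^sub>i\<^sub>+\<^sub>1\<close> such pairs.\<close>

lemma is_group_inverse_unique:
  fixes A X Y :: "real^'n^'n"
  assumes "is_group_inverse A X" "is_group_inverse A Y"
  shows "X = Y"
proof -
  have x1: "A ** X ** A = A" and x2: "X ** A ** X = X" and x3: "A ** X = X ** A"
    and y1: "A ** Y ** A = A" and y2: "Y ** A ** Y = Y" and y3: "A ** Y = Y ** A"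
    using assms unfolding is_group_inverse_def by auto
  have "A ** X = (A ** Y ** A) ** X" by (simp only: y1)
  also have "\<dots> = (Y ** A) ** (A ** X)" by (simp only: y3 matrix_mul_assoc)
  also have "\<dots> = (Y ** A) ** (X ** A)" by (simp only: x3)
  also have "\<dots> = Y ** (A ** X ** A)" by (simp only: matrix_mul_assoc)
  finally have AX_eq_AY: "A ** X = A ** Y" by (simp only: x1 y3)
  have "X = X ** (A ** X)" by (simp only: x2 matrix_mul_assoc)
  also have "\<dots> = (X ** A) ** Y" by (simp only: AX_eq_AY matrix_mul_assoc)
  also have "\<dots> = Y ** A ** Y" by (simp only: x3 [symmetric] AX_eq_AY y3)
  also have "\<dots> = Y" by (simp only: y2)
  finally show ?thesis .
qed

lemma group_inverse_eqI: "is_group_inverse A X \<Longrightarrow> group_inverse A = X"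
  unfolding group_inverse_def by (blast intro: is_group_inverse_unique)

lemma adj_commute: "weighted_graph w \<Longrightarrow> adj w x y \<longleftrightarrow> adj w y x"
  unfolding weighted_graph_def adj_def by metis

lemma tree_path_no_chord:
  fixes w :: "'v::finite \<Rightarrow> 'v \<Rightarrow> real" and v :: "nat \<Rightarrow> 'v"
  assumes tree: "is_tree w" and inj: "inj_on v {1..k}"
    and path: "\<forall>i. 1 \<le> i \<and> i < k \<longrightarrow> adj w (v i) (v (i + 1))"
    and ij: "1 \<le> i" "i + 2 \<le> j" "j \<le> k"
  shows "\<not> adj w (v i) (v j)"
proof
  assume chord: "adj w (v i) (v j)"
  define cs where "cs = map v [i..<Suc j]"
  have len: "length cs = Suc j - i" unfolding cs_def using ij by simp
  have nth: "cs ! m = v (i + m)" if "m < length cs" for m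
    using that ij unfolding len unfolding cs_def by (simp del: upt_Suc)
  have "is_cycle w cs"
    unfolding is_cycle_def
  proof (intro conjI allI impI)
    show "3 \<le> length cs" using len ij by simp
    have "set [i..<Suc j] \<subseteq> {1..k}" using ij by auto
    then have "inj_on v (set [i..<Suc j])" using inj inj_on_subset by blast
    then show "distinct cs" unfolding cs_def by (simp add: distinct_map)
  next
    fix m assume m: "Suc m < length cs"
    then have "adj w (v (i + m)) (v (i + m + 1))" using len ij path by simp
    then show "adj w (cs ! m) (cs ! Suc m)" using m nth[of m] nth[of "Suc m"] by simp
  next
    have "last cs = v j" "hd cs = v i" unfolding cs_def using ij by (simp_all add: hd_map)
    then show "adj w (last cs) (hd cs)"
      using chord adj_commute tree unfolding is_tree_def by metis
  qed
  then show False using tree unfolding is_tree_def by blast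
qed

lemma tree_path_adj_iff:
  fixes w :: "'v::finite \<Rightarrow> 'v \<Rightarrow> real" and v :: "nat \<Rightarrow> 'v"
  assumes tree: "is_tree w" and inj: "inj_on v {1..k}"
    and path: "\<forall>i. 1 \<le> i \<and> i < k \<longrightarrow> adj w (v i) (v (i + 1))"
    and "i \<in> {1..k}" "j \<in> {1..k}"
  shows "adj w (v i) (v j) \<longleftrightarrow> j = i + 1 \<or> i = j + 1"
proof -
  have wg: "weighted_graph w" using tree unfolding is_tree_def by simp
  show ?thesis
  proof
    assume a: "adj w (v i) (v j)"
    then have "i \<noteq> j" using wg unfolding weighted_graph_def adj_def by auto
    moreover have "\<not> i + 2 \<le> j" "\<not> j + 2 \<le> i"
      using tree_path_no_chord[OF tree inj path] assms(4,5) a adj_commute[OF wg] by auto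
    ultimately show "j = i + 1 \<or> i = j + 1" by auto
  next
    assume "j = i + 1 \<or> i = j + 1"
    then show "adj w (v i) (v j)" using path assms(4,5) adj_commute[OF wg] by fastforce
  qed
qed

locale class_T_tree =
  fixes w :: "'v::finite \<Rightarrow> 'v \<Rightarrow> real"
  assumes class_T: "class_T w"
begin

definition nbr :: "'v \<Rightarrow> 'v" where
  "nbr x = (SOME z. adj w x z)"

definition pendant_sqsum :: "'v \<Rightarrow> real" where
  "pendant_sqsum p = (\<Sum>z | pendant w z. (w p z)\<^sup>2)"

lemma is_tree: "is_tree w"
  using class_T unfolding class_T_def by simp

lemma weighted_graph: "weighted_graph w"
  using is_tree unfolding is_tree_def by simp

lemma w_sym: "w u v = w v u"
  using weighted_graph unfolding weighted_graph_def by simp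

lemma w_diag: "w u u = 0"
  using weighted_graph unfolding weighted_graph_def by simp

lemma adj_sym: "adj w x y \<longleftrightarrow> adj w y x"
  using adj_commute[OF weighted_graph] .

lemma pendant_adj_iff:
  assumes "pendant w x"
  shows "adj w x z \<longleftrightarrow> z = nbr x"
proof -
  have "card {z. adj w x z} = 1" using assms unfolding pendant_def degree_def .
  then obtain c where c: "{z. adj w x z} = {c}" by (rule card_1_singletonE)
  then have "adj w x (nbr x)" unfolding nbr_def by (metis singletonI mem_Collect_eq someI)
  then have "nbr x = c" using c by blast
  then show ?thesis using c by blast
qed

lemma nbr_not_pendant:
  assumes x: "pendant w x"
  shows "\<not> pendant w (nbr x)"
proof
  assume y: "pendant w (nbr x)"
  have nbr_nbr: "nbr (nbr x) = x"
    using pendant_adj_iff[OF y, of x] pendant_adj_iff[OF x] adj_sym by simp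
  have closed: "z \<in> {x, nbr x}" if "(x, z) \<in> {(a, b). adj w a b}\<^sup>*" for z
    using that
  proof (induction rule: rtrancl_induct)
    case (step z z')
    then show ?case using x y pendant_adj_iff nbr_nbr by auto
  qed simp
  obtain u where u: "\<not> pendant w u" using class_T unfolding class_T_def by auto
  have "(x, u) \<in> {(a, b). adj w a b}\<^sup>*"
    using class_T unfolding class_T_def is_tree_def connected_graph_def by blast
  then show False using closed u x y by auto
qed

lemma pendant_sqsum_pos:
  assumes "\<not> pendant w p"
  shows "pendant_sqsum p > 0"
proof -
  obtain u where "pendant w u" "adj w p u" using class_T assms unfolding class_T_def by auto
  then show ?thesis unfolding pendant_sqsum_def
    by (intro sum_pos2[where i = u]) (auto simp: adj_def)
qed

lemma w_pendant_eq_0: "pendant w x \<Longrightarrow> z \<noteq> nbr x \<Longrightarrow> w x z = 0"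
  using pendant_adj_iff[of x z] unfolding adj_def by auto

lemma w_pendant_eq_0': "pendant w x \<Longrightarrow> z \<noteq> nbr x \<Longrightarrow> w z x = 0"
  using w_pendant_eq_0 w_sym by metis

lemma nbr_eqI: "pendant w x \<Longrightarrow> w p x \<noteq> 0 \<Longrightarrow> nbr x = p"
  using w_pendant_eq_0'[of x p] by auto

lemma w_nbr_nonzero: "pendant w x \<Longrightarrow> w x (nbr x) \<noteq> 0"
  using pendant_adj_iff unfolding adj_def by blast

lemma pendant_sqsum_nbr_nonzero: "pendant w x \<Longrightarrow> pendant_sqsum (nbr x) \<noteq> 0"
  using pendant_sqsum_pos nbr_not_pendant by (metis less_irrefl)

lemma pendant_sqsum_UNIV: "pendant_sqsum p = (\<Sum>z\<in>UNIV. if pendant w z then (w p z)\<^sup>2 else 0)"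
  unfolding pendant_sqsum_def by (simp add: sum.inter_filter[symmetric])

lemma sum_split_pendant:
  "(\<Sum>z\<in>UNIV. f z) = (\<Sum>z\<in>UNIV. if pendant w z then f z else 0)
     + (\<Sum>z\<in>UNIV. if pendant w z then 0 else (f z :: real))"
  unfolding sum.distrib[symmetric] by (rule sum.cong) auto

definition pendant_row :: "'v \<Rightarrow> 'v \<Rightarrow> real" where
  "pendant_row p y =
     (if pendant w y then - w y (nbr y) * w p (nbr y) / (pendant_sqsum p * pendant_sqsum (nbr y))
      else if y = p then 1 / pendant_sqsum p else 0)"

definition ginv_entry :: "'v \<Rightarrow> 'v \<Rightarrow> real" where
  "ginv_entry x y =
     (if pendant w x then w x (nbr x) * pendant_row (nbr x) y
      else if pendant w y then w y (nbr y) * pendant_row (nbr y) x else 0)"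

text \<open>The idempotent \<open>A A\<^sup>#\<close>: the identity on the non-pendant vertices and, on the
  pendants at a common neighbour \<open>p\<close>, the orthogonal projection onto \<open>(w z p)\<^sub>z\<close>.\<close>
definition proj_entry :: "'v \<Rightarrow> 'v \<Rightarrow> real" where
  "proj_entry x z =
     (if pendant w x \<and> pendant w z then w x (nbr x) * w z (nbr x) / pendant_sqsum (nbr x)
      else if \<not> pendant w x \<and> x = z then 1 else 0)"

lemma ginv_entry_sym: "ginv_entry x y = ginv_entry y x"
proof (cases "pendant w x \<and> pendant w y")
  case True
  then show ?thesis using w_sym[of "nbr x" "nbr y"]
    by (simp add: ginv_entry_def pendant_row_def mult_ac)
qed (auto simp: ginv_entry_def)

lemma proj_entry_sym: "proj_entry x y = proj_entry y x"
proof (cases "pendant w x \<and> pendant w y \<and> nbr x \<noteq> nbr y")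
  case True
  then show ?thesis
    using w_pendant_eq_0[of x "nbr y"] w_pendant_eq_0[of y "nbr x"] unfolding proj_entry_def by auto
qed (auto simp: proj_entry_def mult.commute)

lemma ginv_entry_nonpendant:
  assumes "\<not> pendant w a"
  shows "ginv_entry a y = (if pendant w y \<and> nbr y = a then w y a / pendant_sqsum a else 0)"
  using assms nbr_not_pendant by (auto simp: ginv_entry_def pendant_row_def)

lemma adj_ginv_entry_pendant:
  assumes x: "pendant w x"
  shows "(\<Sum>k\<in>UNIV. w x k * ginv_entry k y) = proj_entry x y"
proof -
  let ?a = "nbr x"
  have "(\<Sum>k\<in>UNIV. w x k * ginv_entry k y)
      = (\<Sum>k\<in>UNIV. if k = ?a then w x ?a * ginv_entry ?a y else 0)"
    by (rule sum.cong) (auto simp: w_pendant_eq_0[OF x])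
  also have "\<dots> = w x ?a * ginv_entry ?a y" by simp
  also have "\<dots> = proj_entry x y"
    using x nbr_not_pendant[OF x] w_pendant_eq_0[of y ?a]
    by (auto simp: ginv_entry_nonpendant proj_entry_def w_sym)
  finally show ?thesis .
qed

lemma adj_ginv_entry_nonpendant:
  assumes x: "\<not> pendant w x"
  shows "(\<Sum>k\<in>UNIV. w x k * ginv_entry k y) = proj_entry x y"
proof -
  have pendant_term: "(if pendant w k then w x k * ginv_entry k y else 0)
      = (if pendant w k then (w x k)\<^sup>2 else 0) * pendant_row x y" for k
  proof (cases "pendant w k \<and> w x k \<noteq> 0")
    case True
    then have "nbr k = x" using nbr_eqI by auto
    then show ?thesis using True unfolding ginv_entry_def by (simp add: w_sym power2_eq_square)
  qed auto
  define c where
    "c = (if pendant w y then w x (nbr y) * w y (nbr y) / pendant_sqsum (nbr y) else 0)"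
  have nonpendant_term: "(if pendant w k then 0 else w x k * ginv_entry k y)
      = (if k = nbr y then c else 0)" for k
    using nbr_not_pendant[of y] by (auto simp: ginv_entry_nonpendant c_def)
  have "(\<Sum>k\<in>UNIV. w x k * ginv_entry k y) = pendant_sqsum x * pendant_row x y + c"
    by (subst sum_split_pendant)
      (simp add: pendant_term nonpendant_term sum_distrib_right[symmetric] pendant_sqsum_UNIV[symmetric])
  also have "\<dots> = proj_entry x y"
    using x pendant_sqsum_pos[OF x] by (auto simp: pendant_row_def proj_entry_def c_def w_sym)
  finally show ?thesis .
qed

lemma adj_ginv_entry: "(\<Sum>k\<in>UNIV. w x k * ginv_entry k y) = proj_entry x y"
  using adj_ginv_entry_pendant adj_ginv_entry_nonpendant by blast

lemma ginv_adj_entry: "(\<Sum>k\<in>UNIV. ginv_entry x k * w k y) = proj_entry x y"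
proof -
  have "(\<Sum>k\<in>UNIV. ginv_entry x k * w k y) = (\<Sum>k\<in>UNIV. w y k * ginv_entry k x)"
    by (rule sum.cong) (simp_all add: ginv_entry_sym w_sym)
  also have "\<dots> = proj_entry x y" by (simp add: adj_ginv_entry proj_entry_sym)
  finally show ?thesis .
qed

lemma proj_entry_pendant_sum:
  assumes x: "pendant w x"
    and M: "\<And>z. pendant w z \<Longrightarrow> nbr z = nbr x \<Longrightarrow> M z = w z (nbr x) * r"
  shows "(\<Sum>z\<in>UNIV. proj_entry x z * M z) = w x (nbr x) * r"
proof -
  let ?a = "nbr x"
  have summand: "proj_entry x z * M z
      = (if pendant w z then (w ?a z)\<^sup>2 else 0) * (w x ?a / pendant_sqsum ?a * r)" for z
  proof (cases "pendant w z \<and> w ?a z \<noteq> 0")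
    case True
    then have "nbr z = ?a" using nbr_eqI by auto
    then show ?thesis using True x M unfolding proj_entry_def by (simp add: w_sym power2_eq_square)
  qed (use x in \<open>auto simp: proj_entry_def w_sym\<close>)
  have "(\<Sum>z\<in>UNIV. proj_entry x z * M z) = pendant_sqsum ?a * (w x ?a / pendant_sqsum ?a * r)"
    by (simp only: summand sum_distrib_right[symmetric] pendant_sqsum_UNIV[symmetric])
  then show ?thesis using pendant_sqsum_nbr_nonzero[OF x] by simp
qed

lemma proj_entry_nonpendant_sum:
  assumes "\<not> pendant w x"
  shows "(\<Sum>z\<in>UNIV. proj_entry x z * M z) = M x"
proof -
  have "proj_entry x z * M z = (if z = x then M x else 0)" for z
    using assms by (simp add: proj_entry_def)
  then show ?thesis by simp
qed

lemma proj_adj_entry: "(\<Sum>z\<in>UNIV. proj_entry x z * w z y) = w x y"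
proof (cases "pendant w x")
  case True
  have "(\<Sum>z\<in>UNIV. proj_entry x z * w z y) = w x (nbr x) * (if y = nbr x then 1 else 0)"
    by (rule proj_entry_pendant_sum[OF True]) (auto simp: w_pendant_eq_0)
  then show ?thesis using w_pendant_eq_0[OF True, of y] by auto
qed (simp add: proj_entry_nonpendant_sum)

lemma proj_ginv_entry: "(\<Sum>z\<in>UNIV. proj_entry x z * ginv_entry z y) = ginv_entry x y"
proof (cases "pendant w x")
  case True
  then show ?thesis
    by (subst proj_entry_pendant_sum[where r = "pendant_row (nbr x) y"]) (auto simp: ginv_entry_def)
qed (simp add: proj_entry_nonpendant_sum)

lemma group_inverse_adj_matrix: "group_inverse (adj_matrix w) = (\<chi> i j. ginv_entry i j)"
proof (rule group_inverse_eqI)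
  let ?A = "adj_matrix w" and ?X = "(\<chi> i j. ginv_entry i j) :: real^'v^'v"
  let ?P = "(\<chi> i j. proj_entry i j) :: real^'v^'v"
  have "?A ** ?X = ?P" "?X ** ?A = ?P" "?P ** ?A = ?A" "?P ** ?X = ?X"
    unfolding matrix_matrix_mult_def adj_matrix_def vec_lambda_beta
      adj_ginv_entry ginv_adj_entry proj_adj_entry proj_ginv_entry by simp_all
  then show "is_group_inverse ?A ?X" unfolding is_group_inverse_def by simp
qed

lemma ginv_entry_nonzero_iff:
  "ginv_entry i j \<noteq> 0 \<longleftrightarrow>
     (pendant w i \<and> pendant w j \<and> adj w (nbr i) (nbr j))
     \<or> (pendant w i \<and> j = nbr i) \<or> (pendant w j \<and> i = nbr j)"
proof -
  have one_pendant: "ginv_entry a y \<noteq> 0 \<longleftrightarrow> pendant w y \<and> a = nbr y"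
    if "\<not> pendant w a" for a y
    using that w_nbr_nonzero[of y] pendant_sqsum_pos[OF that] by (auto simp: ginv_entry_nonpendant)
  consider "\<not> pendant w i" | "\<not> pendant w j" | "pendant w i" "pendant w j" by blast
  then show ?thesis
  proof cases
    case 1
    then show ?thesis using one_pendant by auto
  next
    case 2
    then show ?thesis using one_pendant[of j i] ginv_entry_sym[of i j] by auto
  next
    case 3
    then have "j \<noteq> nbr i" "i \<noteq> nbr j" using nbr_not_pendant by metis+
    then show ?thesis
      using 3 w_nbr_nonzero pendant_sqsum_nbr_nonzero
      by (auto simp: ginv_entry_def pendant_row_def adj_def)
  qed
qed

definition pendant_pair_edges :: "'v set set" where
  "pendant_pair_edges = {{x, y} | x y. pendant w x \<and> pendant w y \<and> adj w (nbr x) (nbr y)}"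

lemma ginv_edges:
  "matrix_graph_edges (group_inverse (adj_matrix w))
     = (\<lambda>x. {x, nbr x}) ` {x. pendant w x} \<union> pendant_pair_edges"
proof -
  have "i \<noteq> j" if "pendant w i" "pendant w j" "adj w (nbr i) (nbr j)" for i j
    using that w_diag unfolding adj_def by auto
  moreover have "x \<noteq> nbr x" if "pendant w x" for x
    using that nbr_not_pendant by metis
  ultimately show ?thesis
    unfolding group_inverse_adj_matrix matrix_graph_edges_def pendant_pair_edges_def
      vec_lambda_beta ginv_entry_nonzero_iff
    by blast
qed

lemma card_ginv_edges:
  "card (matrix_graph_edges (group_inverse (adj_matrix w)))
     = card {x. pendant w x} + card pendant_pair_edges"
proof -
  have "inj_on (\<lambda>x. {x, nbr x}) {x. pendant w x}"
    using nbr_not_pendant by (intro inj_onI) (auto simp: doubleton_eq_iff)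
  moreover have "(\<lambda>x. {x, nbr x}) ` {x. pendant w x} \<inter> pendant_pair_edges = {}"
    using nbr_not_pendant by (fastforce simp: pendant_pair_edges_def doubleton_eq_iff)
  ultimately show ?thesis
    unfolding ginv_edges by (simp add: card_Un_disjoint card_image)
qed

definition pendants_at :: "'v \<Rightarrow> 'v set" where
  "pendants_at p = {x. pendant w x \<and> adj w p x}"

lemma pendants_at_iff: "x \<in> pendants_at p \<longleftrightarrow> pendant w x \<and> nbr x = p"
  unfolding pendants_at_def using pendant_adj_iff[of x p] adj_sym[of p x] by auto

end

locale class_T_spine = class_T_tree w for w :: "'v::finite \<Rightarrow> 'v \<Rightarrow> real" +
  fixes k :: nat and v :: "nat \<Rightarrow> 'v"
  assumes spine_inj: "inj_on v {1..k}"
    and spine_image: "v ` {1..k} = {x. \<not> pendant w x}"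
    and spine_path: "\<forall>i. 1 \<le> i \<and> i < k \<longrightarrow> adj w (v i) (v (i + 1))"
begin

definition spine_pendant_pairs :: "('v \<times> 'v) set" where
  "spine_pendant_pairs = (\<Union>i\<in>{1..<k}. pendants_at (v i) \<times> pendants_at (v (i + 1)))"

lemma spine_pendant_pairsE:
  assumes "(x, y) \<in> spine_pendant_pairs"
  obtains i where "i \<in> {1..<k}" "pendant w x" "pendant w y" "nbr x = v i" "nbr y = v (i + 1)"
  using assms unfolding spine_pendant_pairs_def by (auto simp: pendants_at_iff)

lemma spine_pendant_pairsI:
  "i \<in> {1..<k} \<Longrightarrow> pendant w x \<Longrightarrow> pendant w y \<Longrightarrow> nbr x = v i \<Longrightarrow> nbr y = v (i + 1)
    \<Longrightarrow> (x, y) \<in> spine_pendant_pairs"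
  unfolding spine_pendant_pairs_def by (auto simp: pendants_at_iff)

lemma pendant_pair_edges_spine:
  "pendant_pair_edges = (\<lambda>(x, y). {x, y}) ` spine_pendant_pairs"
proof (intro equalityI subsetI)
  fix e assume "e \<in> pendant_pair_edges"
  then obtain x y where e: "e = {x, y}" and xy: "pendant w x" "pendant w y" "adj w (nbr x) (nbr y)"
    unfolding pendant_pair_edges_def by auto
  have "nbr x \<in> v ` {1..k}" "nbr y \<in> v ` {1..k}"
    using xy(1,2) nbr_not_pendant spine_image by auto
  then obtain i j where ij: "i \<in> {1..k}" "j \<in> {1..k}" "nbr x = v i" "nbr y = v j"
    by blast
  have "j = i + 1 \<or> i = j + 1"
    using xy(3) ij tree_path_adj_iff[OF is_tree spine_inj spine_path] by simp
  then show "e \<in> (\<lambda>(x, y). {x, y}) ` spine_pendant_pairs"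
  proof
    assume "j = i + 1"
    then have "(x, y) \<in> spine_pendant_pairs" using spine_pendant_pairsI[of i x y] ij xy by simp
    then show ?thesis unfolding e by (rule rev_image_eqI) simp
  next
    assume "i = j + 1"
    then have "(y, x) \<in> spine_pendant_pairs" using spine_pendant_pairsI[of j y x] ij xy by simp
    then show ?thesis unfolding e by (rule rev_image_eqI) auto
  qed
next
  fix e assume "e \<in> (\<lambda>(x, y). {x, y}) ` spine_pendant_pairs"
  then obtain x y where e: "e = {x, y}" and "(x, y) \<in> spine_pendant_pairs" by auto
  from this(2) obtain i where "i \<in> {1..<k}" "pendant w x" "pendant w y" "nbr x = v i" "nbr y = v (i + 1)"
    by (rule spine_pendant_pairsE)
  then have "pendant w x \<and> pendant w y \<and> adj w (nbr x) (nbr y)" using spine_path by simp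
  then show "e \<in> pendant_pair_edges" unfolding e pendant_pair_edges_def by blast
qed

lemma inj_on_doubleton_spine_pendant_pairs: "inj_on (\<lambda>(x, y). {x, y}) spine_pendant_pairs"
proof (intro inj_onI, clarify)
  fix a b c d
  assume ab: "(a, b) \<in> spine_pendant_pairs" and cd: "(c, d) \<in> spine_pendant_pairs"
    and eq: "{a, b} = {c, d}"
  obtain i where i: "i \<in> {1..<k}" "nbr a = v i" "nbr b = v (i + 1)"
    by (rule spine_pendant_pairsE[OF ab]) blast
  obtain j where j: "j \<in> {1..<k}" "nbr c = v j" "nbr d = v (j + 1)"
    by (rule spine_pendant_pairsE[OF cd]) blast
  show "a = c \<and> b = d"
  proof (rule ccontr)
    assume "\<not> (a = c \<and> b = d)"
    then have "a = d" "b = c" using eq by (auto simp: doubleton_eq_iff)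
    then have "v i = v (j + 1)" "v (i + 1) = v j" using i j by auto
    then have "i = j + 1" "i + 1 = j" using inj_onD[OF spine_inj] i j by auto
    then show False by simp
  qed
qed

lemma card_spine_pendant_pairs:
  "card spine_pendant_pairs
     = (\<Sum>i = 1..<k. card (pendants_at (v i)) * card (pendants_at (v (i + 1))))"
  unfolding spine_pendant_pairs_def
proof (subst card_UN_disjoint)
  show "\<forall>i\<in>{1..<k}. \<forall>j\<in>{1..<k}. i \<noteq> j \<longrightarrow>
      pendants_at (v i) \<times> pendants_at (v (i + 1)) \<inter> pendants_at (v j) \<times> pendants_at (v (j + 1)) = {}"
    using inj_onD[OF spine_inj] by (auto simp: pendants_at_iff)
qed (simp_all add: card_cartesian_product)

end

theorem proposition3p12:
  fixes w :: "'v::finite \<Rightarrow> 'v \<Rightarrow> real"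
    and k :: nat and v :: "nat \<Rightarrow> 'v"
  assumes "class_T w"
    and "caterpillar w"
    and "\<not> is_star w"
    and "inj_on v {1..k}"
    and "v ` {1..k} = {x. \<not> pendant w x}"
    and "\<forall>i. 1 \<le> i \<and> i < k \<longrightarrow> adj w (v i) (v (i + 1))"
  shows "card (matrix_graph_edges (group_inverse (adj_matrix w)))
           = card {x. pendant w x}
             + (\<Sum>i = 1..<k. card {x. pendant w x \<and> adj w (v i) x}
                            * card {x. pendant w x \<and> adj w (v (i + 1)) x})"
proof -
  interpret class_T_spine w k v
    using assms(1,4,5,6) by (simp add: class_T_spine_def class_T_spine_axioms_def class_T_tree_def)
  have "card (matrix_graph_edges (group_inverse (adj_matrix w)))
      = card {x. pendant w x} + card spine_pendant_pairs"
    using card_ginv_edges pendant_pair_edges_spine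
      card_image[OF inj_on_doubleton_spine_pendant_pairs] by simp
  then show ?thesis using card_spine_pendant_pairs unfolding pendants_at_def by simp
qed

end
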